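(* Let $n\ge 2$, let $J\subseteq[n]$, let $i\in[n]\setminus J$ and put $J'=J\cup\{i\}$. If $(X_t)_{t\ge 0}$ is a continuous-time Markov chain with the transition rates of $\Theta_J$ (and any initial distribution), then $(\varphi_i(X_t))_{t\ge 0}$ is a continuous-time Markov chain with the transition rates of $\Theta_{J'}$.
   Context: Type C TASEP. Fix $n\ge 2$. There are $2n$ sites arranged in two rows and $n$ columns: upper sites $U_1,\dots,U_n$ and lower sites $L_1,\dots,L_n$. They form a cycle with the following "counter-clockwise successor": $\mathrm{succ}(U_j)=U_{j-1}$ for $j\ge2$, $\mathrm{succ}(U_1)=L_1$, $\mathrm{succ}(L_j)=L_{j+1}$ for $j<n$, $\mathrm{succ}(L_n)=U_n$. A state is a placement of particles, each carrying a positive integer class, on the sites such that no column contains more than one particle (columns may be empty). Ringing the bell at a site $s$ does the following: if $s$ holds a particle $p$, let $s'=\mathrm{succ}(s)$; if $s'$ is empty, $p$ moves to $s'$; if $s'$ holds a particle of strictly larger class than $p$, the two particles swap; otherwise nothing happens. Define $\sigma_0$ = ring the bell at $U_1$; $\sigma_n$ = ring the bell at $L_n$; for $0<j<n$, $\sigma_j$ = ring the bells at $L_j$ and at $U_{j+1}$ (these two commute). The Markov chain $\Theta$ has, from each state $x$, the transitions $x\to\sigma_j x$ for $j\in\{0,\dots,n\}$, with rate $1$ for $j\in\{0,n\}$ and rate $2$ for $0<j<n$. The number of particles of each class is preserved. Types: for $J\subseteq[n]$, start from a state with exactly one particle of each class $1,\dots,n$ (all columns occupied); for each $j\in J\setminus\{n\}$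 identify classes $j$ and $j+1$; if $n\in J$ remove the particles of (the class containing) $n$; then renumber the remaining classes by $1,2,\dots$ in increasing order. The resulting vector $\mathbf m_J=(m_1,m_2,\dots)$ of numbers of particles per class is the type, and $\Omega_J$ is the set of all states having $m_k$ particles of class $k$ for every $k$. $\Theta_J$ is the restriction of $\Theta$ to $\Omega_J$ (it is irreducible and aperiodic, with unique stationary distribution $\pi_J$). For $i\notin J$ and $J'=J\cup\{i\}$, the map $\varphi_i:\Omega_J\to\Omega_{J'}$ performs the same identification: if $i<n$ it merges the two classes separated at $i$ (those containing original classes $i$ and $i+1$) into one and renumbers; if $i=n$ it removes all particles of the largest class. *)

theory Defs
  imports "HOL-Probability.Probability"
begin

datatype site = U nat | L nat

text \<open>A state assigns to each site either no particle or a particle of a given class.\<close>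
type_synonym state = "site \<Rightarrow> nat option"

fun site_ok :: "nat \<Rightarrow> site \<Rightarrow> bool" where
  "site_ok n (U j) = (1 \<le> j \<and> j \<le> n)"
| "site_ok n (L j) = (1 \<le> j \<and> j \<le> n)"

fun succ :: "nat \<Rightarrow> site \<Rightarrow> site" where
  "succ n (U j) = (if j \<ge> 2 then U (j - 1) else L 1)"
| "succ n (L j) = (if j < n then L (j + 1) else U n)"

definition ring :: "nat \<Rightarrow> site \<Rightarrow> state \<Rightarrow> state" where
  "ring n s x =
     (case x s of
        None \<Rightarrow> x
      | Some p \<Rightarrow>
          (let s' = succ n s in
           case x s' of
             None \<Rightarrow> x(s := None, s' := Some p)
           | Some q \<Rightarrow> (if p < q then x(s := Some q, s' := Some p) else x)))"

definition sigma :: "nat \<Rightarrow> nat \<Rightarrow> state \<Rightarrow> state" where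
  "sigma n j x =
     (if j = 0 then ring n (U 1) x
      else if j = n then ring n (L n) x
      else ring n (U (j + 1)) (ring n (L j) x))"

definition wt :: "nat \<Rightarrow> nat \<Rightarrow> real" where
  "wt n j = (if j = 0 \<or> j = n then 1 else 2)"

text \<open>Total rate of jumping from x to y (y \<noteq> x) in \<Theta>.\<close>
definition rate :: "nat \<Rightarrow> state \<Rightarrow> state \<Rightarrow> real" where
  "rate n x y = (\<Sum>j\<in>{0..n}. if sigma n j x = y then wt n j else 0)"

text \<open>Image of original class c (1 \<le> c \<le> n) under the identification for J:
  None if it is removed, otherwise its renumbered class.\<close>
definition typemap :: "nat \<Rightarrow> nat set \<Rightarrow> nat \<Rightarrow> nat option" where
  "typemap n J c =
     (if {c..n} \<subseteq> J then None
      else Some (1 + card {j \<in> {1..<c}. j \<notin> J}))"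

definition mJ :: "nat \<Rightarrow> nat set \<Rightarrow> nat \<Rightarrow> nat" where
  "mJ n J k = card {c \<in> {1..n}. typemap n J c = Some k}"

definition Omega :: "nat \<Rightarrow> nat set \<Rightarrow> state set" where
  "Omega n J = {x.
      (\<forall>s. x s \<noteq> None \<longrightarrow> site_ok n s)
    \<and> (\<forall>j\<in>{1..n}. x (U j) = None \<or> x (L j) = None)
    \<and> (\<forall>k. card {s. x s = Some k} = mJ n J k)}"

text \<open>\<phi>_i : Omega n J \<rightarrow> Omega n (J \<union> {i}): a particle of class c (in the J numbering)
  gets the class (in the J\<union>{i} numbering) of any original class that maps to c.\<close>
definition phi :: "nat \<Rightarrow> nat set \<Rightarrow> nat \<Rightarrow> state \<Rightarrow> state" where
  "phi n J i x = (\<lambda>s. case x s of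
       None \<Rightarrow> None
     | Some c \<Rightarrow> typemap n (insert i J) (SOME d. d \<in> {1..n} \<and> typemap n J d = Some c))"

definition gen :: "nat \<Rightarrow> state set \<Rightarrow> state \<Rightarrow> state \<Rightarrow> real" where
  "gen n S x y = (if x = y then - (\<Sum>z\<in>S - {x}. rate n x z) else rate n x y)"

fun matpow :: "'a set \<Rightarrow> ('a \<Rightarrow> 'a \<Rightarrow> real) \<Rightarrow> nat \<Rightarrow> 'a \<Rightarrow> 'a \<Rightarrow> real" where
  "matpow S Q 0 x y = (if x = y then 1 else 0)"
| "matpow S Q (Suc k) x y = (\<Sum>z\<in>S. Q x z * matpow S Q k z y)"

definition trans :: "'a set \<Rightarrow> ('a \<Rightarrow> 'a \<Rightarrow> real) \<Rightarrow> real \<Rightarrow> 'a \<Rightarrow> 'a \<Rightarrow> real" where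
  "trans S Q t x y = (\<Sum>k. t ^ k / fact k * matpow S Q k x y)"

definition is_ctmc :: "'w measure \<Rightarrow> 'a set \<Rightarrow> ('a \<Rightarrow> 'a \<Rightarrow> real) \<Rightarrow> (real \<Rightarrow> 'w \<Rightarrow> 'a) \<Rightarrow> bool" where
  "is_ctmc M S Q X \<longleftrightarrow>
     (\<forall>t\<ge>0. \<forall>\<omega>\<in>space M. X t \<omega> \<in> S)
   \<and> (\<forall>t\<ge>0. \<forall>x. {\<omega> \<in> space M. X t \<omega> = x} \<in> sets M)
   \<and> (\<forall>(k::nat) (t::nat \<Rightarrow> real) (x::nat \<Rightarrow> 'a).
        0 \<le> t 0 \<longrightarrow> (\<forall>j<k. t j < t (Suc j)) \<longrightarrow>
        measure M {\<omega> \<in> space M. \<forall>j\<le>k. X (t j) \<omega> = x j}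
          = measure M {\<omega> \<in> space M. X (t 0) \<omega> = x 0}
            * (\<Prod>j<k. trans S Q (t (Suc j) - t j) (x j) (x (Suc j))))"

end

theory Submission
  imports Defs
begin

text \<open>
  Dynkin's lumpability criterion: if for every state \<open>x\<close> the total rate from \<open>x\<close> into each fibre
  \<open>\<phi>\<^sup>-\<^sup>1(y')\<close> equals the rate \<open>Q'(\<phi> x, y')\<close> of a chain on the image, then the same identity holds
  for all powers of the generator and hence for the transition functions \<open>exp(tQ)\<close>; summing the
  finite-dimensional distributions of \<open>X\<close> over products of fibres then gives those of \<open>\<phi>(X)\<close>.

  For the TASEP the criterion follows from \<open>\<sigma>\<^sub>j \<circ> \<phi>\<^sub>i = \<phi>\<^sub>i \<circ> \<sigma>\<^sub>j\<close>. Treating an empty site as a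
  particle of class \<open>\<infinity>\<close>, a bell swaps the contents of \<open>s\<close> and its successor exactly when the
  class at \<open>s\<close> is smaller, and \<open>\<phi>\<^sub>i\<close> is a monotone relabelling of classes in which the removed
  class becomes \<open>\<infinity>\<close>; a monotone relabelling either preserves the comparison or makes the two
  contents equal, in which case the swap is invisible.
\<close>

section \<open>Lumpable continuous-time Markov chains\<close>

definition lumpable :: "'a set \<Rightarrow> ('a \<Rightarrow> 'a \<Rightarrow> real) \<Rightarrow> ('a \<Rightarrow> 'b) \<Rightarrow> ('b \<Rightarrow> 'b \<Rightarrow> real) \<Rightarrow> bool" where
  "lumpable S Q f Q' \<longleftrightarrow> (\<forall>x\<in>S. \<forall>y'. (\<Sum>y\<in>{y \<in> S. f y = y'}. Q x y) = Q' (f x) y')"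

lemma matpow_lumpable:
  assumes "finite S" "finite S'" "f ` S \<subseteq> S'"
    and lump: "lumpable S Q f Q'"
    and "x \<in> S"
  shows "(\<Sum>y\<in>{y \<in> S. f y = y'}. matpow S Q k x y) = matpow S' Q' k (f x) y'"
  using \<open>x \<in> S\<close>
proof (induction k arbitrary: x)
  case 0
  then show ?case using \<open>finite S\<close> by (simp add: sum.delta)
next
  case (Suc k)
  let ?fib = "\<lambda>z'. {z \<in> S. f z = z'}"
  have "(\<Sum>y\<in>?fib y'. matpow S Q (Suc k) x y) = (\<Sum>z\<in>S. Q x z * (\<Sum>y\<in>?fib y'. matpow S Q k z y))"
    by (simp only: matpow.simps sum_distrib_left sum.swap[of _ "?fib y'"])
  also have "\<dots> = (\<Sum>z\<in>S. Q x z * matpow S' Q' k (f z) y')"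
    by (intro sum.cong refl) (simp add: Suc.IH)
  also have "\<dots> = (\<Sum>z'\<in>S'. \<Sum>z\<in>?fib z'. Q x z * matpow S' Q' k (f z) y')"
    by (rule sum.group[OF assms(1-3), symmetric])
  also have "\<dots> = (\<Sum>z'\<in>S'. (\<Sum>z\<in>?fib z'. Q x z) * matpow S' Q' k z' y')"
    by (intro sum.cong refl) (simp add: sum_distrib_right)
  also have "\<dots> = matpow S' Q' (Suc k) (f x) y'"
    using lump Suc.prems by (simp add: lumpable_def)
  finally show ?case .
qed

lemma abs_matpow_le:
  assumes "finite S" "x \<in> S" and row: "\<And>z. z \<in> S \<Longrightarrow> (\<Sum>w\<in>S. \<bar>Q z w\<bar>) \<le> B"
  shows "\<bar>matpow S Q k x y\<bar> \<le> B ^ k"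
  using \<open>x \<in> S\<close>
proof (induction k arbitrary: x)
  case (Suc k)
  have "0 \<le> B" by (rule order_trans[OF sum_nonneg row[OF Suc.prems]]) simp
  have "\<bar>matpow S Q (Suc k) x y\<bar> \<le> (\<Sum>z\<in>S. \<bar>Q x z\<bar> * \<bar>matpow S Q k z y\<bar>)"
    by (simp add: abs_mult[symmetric] sum_abs)
  also have "\<dots> \<le> (\<Sum>z\<in>S. \<bar>Q x z\<bar> * B ^ k)"
    by (intro sum_mono mult_left_mono Suc.IH) auto
  also have "\<dots> \<le> B * B ^ k"
    unfolding sum_distrib_right[symmetric] using row[OF Suc.prems] \<open>0 \<le> B\<close>
    by (simp add: mult_right_mono)
  finally show ?case by simp
qed simp

lemma summable_matexp_series:
  assumes "finite S" "x \<in> S"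
  shows "summable (\<lambda>k. t ^ k / fact k * matpow S Q k x y)"
proof (rule summable_comparison_test)
  define B where "B = (\<Sum>z\<in>S. \<Sum>w\<in>S. \<bar>Q z w\<bar>)"
  have row: "(\<Sum>w\<in>S. \<bar>Q z w\<bar>) \<le> B" if "z \<in> S" for z
    unfolding B_def using \<open>finite S\<close> that
    by (intro member_le_sum) (auto intro: sum_nonneg)
  show "summable (\<lambda>k. inverse (fact k) * (\<bar>t\<bar> * B) ^ k)" by (rule summable_exp)
  show "\<exists>N. \<forall>k\<ge>N. norm (t ^ k / fact k * matpow S Q k x y) \<le> inverse (fact k) * (\<bar>t\<bar> * B) ^ k"
  proof (intro exI allI impI)
    fix k :: nat
    have "norm (t ^ k / fact k * matpow S Q k x y) = \<bar>t\<bar> ^ k / fact k * \<bar>matpow S Q k x y\<bar>"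
      by (simp add: abs_mult power_abs)
    also have "\<dots> \<le> \<bar>t\<bar> ^ k / fact k * B ^ k"
      by (intro mult_left_mono abs_matpow_le[OF assms row]) auto
    also have "\<dots> = inverse (fact k) * (\<bar>t\<bar> * B) ^ k"
      by (simp add: power_mult_distrib divide_inverse)
    finally show "norm (t ^ k / fact k * matpow S Q k x y) \<le> inverse (fact k) * (\<bar>t\<bar> * B) ^ k" .
  qed
qed

lemma trans_lumpable:
  assumes "finite S" "finite S'" "f ` S \<subseteq> S'"
    and lump: "lumpable S Q f Q'"
    and "x \<in> S"
  shows "(\<Sum>y\<in>{y \<in> S. f y = y'}. trans S Q t x y) = trans S' Q' t (f x) y'"
proof -
  have "(\<Sum>y\<in>{y \<in> S. f y = y'}. trans S Q t x y)
      = (\<Sum>k. \<Sum>y\<in>{y \<in> S. f y = y'}. t ^ k / fact k * matpow S Q k x y)"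
    unfolding trans_def using summable_matexp_series[OF assms(1,5)] by (rule suminf_sum[symmetric])
  also have "\<dots> = (\<Sum>k. t ^ k / fact k * matpow S' Q' k (f x) y')"
    by (simp only: sum_distrib_left[symmetric] matpow_lumpable[OF assms])
  finally show ?thesis by (simp add: trans_def)
qed

lemma sum_PiE_singleton:
  "(\<Sum>x\<in>PiE {a} A. g (x a)) = (\<Sum>z\<in>A a. g z)"
proof -
  have "PiE {a} A = (\<lambda>z. \<lambda>j\<in>{a}. z) ` A a"
    unfolding PiE_over_singleton_iff by blast
  moreover have "inj_on (\<lambda>z. \<lambda>j\<in>{a}. z) (A a)"
    by (rule inj_onI) (drule fun_cong[of _ _ a], simp)
  ultimately show ?thesis by (simp add: sum.reindex)
qed

lemma sum_paths_trans_lumpable: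
  assumes "finite S" "finite S'" "f ` S \<subseteq> S'"
    and lump: "lumpable S Q f Q'"
  shows "(\<Sum>x\<in>PiE {..m} (\<lambda>j. {z \<in> S. f z = y' j}). p (x 0) * (\<Prod>j<m. trans S Q (D j) (x j) (x (Suc j))))
       = (\<Sum>z\<in>{z \<in> S. f z = y' 0}. p z) * (\<Prod>j<m. trans S' Q' (D j) (y' j) (y' (Suc j)))"
proof (induction m)
  case 0
  show ?case using sum_PiE_singleton[where g = p] by simp
next
  case (Suc m)
  let ?fib = "\<lambda>j. {z \<in> S. f z = y' j}"
  let ?w = "\<lambda>m x. p (x 0) * (\<Prod>j<m. trans S Q (D j) (x j) (x (Suc j)))"
  have inj: "inj_on (\<lambda>(z, g). g(Suc m := z)) (?fib (Suc m) \<times> PiE {..m} ?fib)"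
    by (rule inj_combinator) simp
  have extend: "?w (Suc m) (g(Suc m := z)) = ?w m g * trans S Q (D m) (g m) z" for g z
  proof -
    have "(\<Prod>j<m. trans S Q (D j) ((g(Suc m := z)) j) ((g(Suc m := z)) (Suc j)))
        = (\<Prod>j<m. trans S Q (D j) (g j) (g (Suc j)))"
      by (rule prod.cong) auto
    then show ?thesis by (simp add: mult.assoc)
  qed
  have last_step: "(\<Sum>z\<in>?fib (Suc m). trans S Q (D m) (g m) z) = trans S' Q' (D m) (y' m) (y' (Suc m))"
    if "g \<in> PiE {..m} ?fib" for g
  proof -
    have "g m \<in> ?fib m" using that by auto
    then show ?thesis using trans_lumpable[OF assms] by simp
  qed
  have "(\<Sum>x\<in>PiE {..Suc m} ?fib. ?w (Suc m) x)
      = (\<Sum>(z, g)\<in>?fib (Suc m) \<times> PiE {..m} ?fib. ?w (Suc m) (g(Suc m := z)))"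
    unfolding atMost_Suc PiE_insert_eq by (subst sum.reindex[OF inj]) (simp add: case_prod_unfold)
  also have "\<dots> = (\<Sum>z\<in>?fib (Suc m). \<Sum>g\<in>PiE {..m} ?fib. ?w m g * trans S Q (D m) (g m) z)"
    by (simp add: extend sum.cartesian_product mult.assoc)
  also have "\<dots> = (\<Sum>g\<in>PiE {..m} ?fib. ?w m g * (\<Sum>z\<in>?fib (Suc m). trans S Q (D m) (g m) z))"
    by (simp only: sum.swap[of _ "?fib (Suc m)"] sum_distrib_left)
  also have "\<dots> = (\<Sum>g\<in>PiE {..m} ?fib. ?w m g * trans S' Q' (D m) (y' m) (y' (Suc m)))"
    by (intro sum.cong refl) (simp add: last_step)
  also have "\<dots> = (\<Sum>g\<in>PiE {..m} ?fib. ?w m g) * trans S' Q' (D m) (y' m) (y' (Suc m))"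
    by (rule sum_distrib_right[symmetric])
  also have "\<dots> = (\<Sum>z\<in>?fib 0. p z) * (\<Prod>j<m. trans S' Q' (D j) (y' j) (y' (Suc j)))
      * trans S' Q' (D m) (y' m) (y' (Suc m))"
    by (simp only: Suc.IH)
  finally show ?case by (simp add: mult.assoc)
qed

lemma measure_path_image_eq_sum:
  fixes m :: nat
  assumes "finite_measure M" "finite S"
    and range: "\<And>j \<omega>. j \<le> m \<Longrightarrow> \<omega> \<in> space M \<Longrightarrow> X (t j) \<omega> \<in> S"
    and meas: "\<And>j x. j \<le> m \<Longrightarrow> {\<omega> \<in> space M. X (t j) \<omega> = x} \<in> sets M"
  shows "measure M {\<omega> \<in> space M. \<forall>j\<le>m. f (X (t j) \<omega>) = y' j}
       = (\<Sum>x\<in>PiE {..m} (\<lambda>j. {z \<in> S. f z = y' j}). measure M {\<omega> \<in> space M. \<forall>j\<le>m. X (t j) \<omega> = x j})"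
proof -
  let ?P = "PiE {..m} (\<lambda>j. {z \<in> S. f z = y' j})"
  let ?E = "\<lambda>x. {\<omega> \<in> space M. \<forall>j\<le>m. X (t j) \<omega> = x j}"
  have image_event: "{\<omega> \<in> space M. \<forall>j\<le>m. f (X (t j) \<omega>) = y' j} = (\<Union>x\<in>?P. ?E x)"
  proof (intro set_eqI iffI)
    fix \<omega> assume "\<omega> \<in> {\<omega> \<in> space M. \<forall>j\<le>m. f (X (t j) \<omega>) = y' j}"
    then have "(\<lambda>j\<in>{..m}. X (t j) \<omega>) \<in> ?P" and "\<omega> \<in> ?E (\<lambda>j\<in>{..m}. X (t j) \<omega>)"
      using range by auto
    then show "\<omega> \<in> (\<Union>x\<in>?P. ?E x)" by blast
  next
    fix \<omega> assume "\<omega> \<in> (\<Union>x\<in>?P. ?E x)"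
    then obtain x where "x \<in> ?P" "\<omega> \<in> ?E x" by blast
    then show "\<omega> \<in> {\<omega> \<in> space M. \<forall>j\<le>m. f (X (t j) \<omega>) = y' j}"
      by (auto dest: PiE_mem)
  qed
  have disjoint: "disjoint_family_on ?E ?P"
    unfolding disjoint_family_on_def
  proof (intro ballI impI)
    fix x x' assume "x \<in> ?P" "x' \<in> ?P" "x \<noteq> x'"
    then obtain j where "j \<le> m" "x j \<noteq> x' j" using PiE_ext[OF \<open>x \<in> ?P\<close> \<open>x' \<in> ?P\<close>] by auto
    then show "?E x \<inter> ?E x' = {}" by auto
  qed
  have events: "?E x \<in> sets M" for x
  proof -
    have "{\<omega> \<in> space M. \<forall>j\<in>{..m}. X (t j) \<omega> = x j} \<in> sets M"
      using meas by (intro sets.sets_Collect_finite_All) auto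
    then show ?thesis by (simp only: Ball_def atMost_iff)
  qed
  have "finite ?P" using \<open>finite S\<close> by (simp add: finite_PiE)
  then have "measure M (\<Union>x\<in>?P. ?E x) = (\<Sum>x\<in>?P. measure M (?E x))"
    using image_subsetI[of ?P ?E, OF events] disjoint
    by (rule finite_measure.finite_measure_finite_Union[OF assms(1)])
  then show ?thesis unfolding image_event .
qed

lemma increasing_times_nonneg:
  fixes t :: "nat \<Rightarrow> real"
  assumes "0 \<le> t 0" "\<forall>j<k. t j < t (Suc j)" "j \<le> k"
  shows "0 \<le> t j"
  using assms(3)
proof (induction j)
  case (Suc j)
  then show ?case using assms(2) by (metis Suc_le_lessD less_imp_le order_trans Suc_leD)
qed (use assms(1) in simp)

theorem is_ctmc_lumpable:
  assumes "finite_measure M" and X: "is_ctmc M S Q X"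
    and "finite S" "finite S'" "f ` S \<subseteq> S'"
    and lump: "lumpable S Q f Q'"
  shows "is_ctmc M S' Q' (\<lambda>t \<omega>. f (X t \<omega>))"
proof -
  note X_def = X[unfolded is_ctmc_def]
  have range: "X t \<omega> \<in> S" if "0 \<le> t" "\<omega> \<in> space M" for t \<omega>
    using X_def that by blast
  have meas: "{\<omega> \<in> space M. X t \<omega> = x} \<in> sets M" if "0 \<le> t" for t x
    using X_def that by blast
  show ?thesis
    unfolding is_ctmc_def
  proof (intro conjI allI impI ballI)
    fix t :: real and \<omega> assume "0 \<le> t" "\<omega> \<in> space M"
    then show "f (X t \<omega>) \<in> S'" using range \<open>f ` S \<subseteq> S'\<close> by blast
  next
    fix t :: real and y assume "0 \<le> t"
    then have "{\<omega> \<in> space M. f (X t \<omega>) = y} = (\<Union>x\<in>{z \<in> S. f z = y}. {\<omega> \<in> space M. X t \<omega> = x})"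
      using range by blast
    then show "{\<omega> \<in> space M. f (X t \<omega>) = y} \<in> sets M"
      using meas \<open>0 \<le> t\<close> \<open>finite S\<close> by (simp add: sets.finite_UN)
  next
    fix k :: nat and t :: "nat \<Rightarrow> real" and y' :: "nat \<Rightarrow> _"
    assume t0: "0 \<le> t 0" and inc: "\<forall>j<k. t j < t (Suc j)"
    let ?fib = "\<lambda>j. {z \<in> S. f z = y' j}"
    have "measure M {\<omega> \<in> space M. \<forall>j\<le>k. f (X (t j) \<omega>) = y' j}
        = (\<Sum>x\<in>PiE {..k} ?fib. measure M {\<omega> \<in> space M. \<forall>j\<le>k. X (t j) \<omega> = x j})"
      using range meas increasing_times_nonneg[OF t0 inc]
      by (intro measure_path_image_eq_sum[OF assms(1,3)]) simp_all
    also have "\<dots> = (\<Sum>x\<in>PiE {..k} ?fib.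
        measure M {\<omega> \<in> space M. X (t 0) \<omega> = x 0} * (\<Prod>j<k. trans S Q (t (Suc j) - t j) (x j) (x (Suc j))))"
      using X_def t0 inc by (intro sum.cong refl) blast
    also have "\<dots> = (\<Sum>z\<in>?fib 0. measure M {\<omega> \<in> space M. X (t 0) \<omega> = z})
        * (\<Prod>j<k. trans S' Q' (t (Suc j) - t j) (y' j) (y' (Suc j)))"
      by (rule sum_paths_trans_lumpable[OF assms(3-5) lump])
    also have "(\<Sum>z\<in>?fib 0. measure M {\<omega> \<in> space M. X (t 0) \<omega> = z})
        = measure M {\<omega> \<in> space M. f (X (t 0) \<omega>) = y' 0}"
      using measure_path_image_eq_sum[OF assms(1,3), where m = 0 and t = t and f = f and y' = y'] range meas t0
      by (simp add: sum_PiE_singleton[where g = "\<lambda>z. measure M {\<omega> \<in> space M. X (t 0) \<omega> = z}"])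
    finally show "measure M {\<omega> \<in> space M. \<forall>j\<le>k. f (X (t j) \<omega>) = y' j}
        = measure M {\<omega> \<in> space M. f (X (t 0) \<omega>) = y' 0}
          * (\<Prod>j<k. trans S' Q' (t (Suc j) - t j) (y' j) (y' (Suc j)))" .
  qed
qed

section \<open>The type C TASEP\<close>

lemma succ_neq: "succ n s \<noteq> s"
  by (cases s) auto

lemma site_ok_succ: "1 \<le> n \<Longrightarrow> site_ok n s \<Longrightarrow> site_ok n (succ n s)"
  by (cases s) auto

lemma finite_site_ok: "finite {s. site_ok n s}"
proof -
  have "{s. site_ok n s} = U ` {1..n} \<union> L ` {1..n}"
    by (auto elim: site_ok.elims)
  then show ?thesis by simp
qed

text \<open>An empty site behaves like a particle of class \<open>\<infinity>\<close>.\<close>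
definition class_rank :: "nat option \<Rightarrow> enat" where
  "class_rank v = (case v of None \<Rightarrow> \<infinity> | Some p \<Rightarrow> enat p)"

lemma class_rank_eq_iff [simp]: "class_rank a = class_rank b \<longleftrightarrow> a = b"
  by (auto simp: class_rank_def split: option.splits)

lemma ring_eq:
  "ring n s x = (if class_rank (x s) < class_rank (x (succ n s))
                 then x(s := x (succ n s), succ n s := x s) else x)"
  using succ_neq[of n s]
  by (auto simp: ring_def class_rank_def Let_def fun_eq_iff split: option.splits)

lemma ring_comp_mono:
  assumes "range x \<subseteq> V"
    and mono: "\<And>a b. a \<in> V \<Longrightarrow> b \<in> V \<Longrightarrow> class_rank a \<le> class_rank b \<Longrightarrow> class_rank (g a) \<le> class_rank (g b)"
  shows "ring n s (g \<circ> x) = g \<circ> ring n s x"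
proof -
  let ?s' = "succ n s"
  have V: "x s \<in> V" "x ?s' \<in> V" using assms(1) by auto
  show ?thesis
  proof (cases "class_rank (x s) < class_rank (x ?s')")
    case True
    then have "class_rank (g (x s)) \<le> class_rank (g (x ?s'))" using mono[OF V] by simp
    then consider "class_rank (g (x s)) < class_rank (g (x ?s'))" | "g (x s) = g (x ?s')"
      by (metis order_le_less class_rank_eq_iff)
    then show ?thesis using True by cases (auto simp: ring_eq fun_eq_iff)
  next
    case False
    then have "\<not> class_rank (g (x s)) < class_rank (g (x ?s'))" using mono[OF V(2,1)] by (simp add: not_less)
    then show ?thesis using False by (simp add: ring_eq)
  qed
qed

lemma range_ring_subset: "range (ring n s x) \<subseteq> range x"
  by (auto simp: ring_eq)

lemma sigma_comp_mono:
  assumes "range x \<subseteq> V"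
    and "\<And>a b. a \<in> V \<Longrightarrow> b \<in> V \<Longrightarrow> class_rank a \<le> class_rank b \<Longrightarrow> class_rank (g a) \<le> class_rank (g b)"
  shows "sigma n j (g \<circ> x) = g \<circ> sigma n j x"
  using ring_comp_mono[OF assms] ring_comp_mono[OF order_trans[OF range_ring_subset assms(1)] assms(2)]
  by (simp add: sigma_def)

lemma card_ring_fibre: "card {t. ring n s x t = v} = card {t. x t = v}"
proof -
  let ?\<tau> = "Transposition.transpose s (succ n s)"
  have "x(s := x (succ n s), succ n s := x s) = x \<circ> ?\<tau>"
    by (auto simp: fun_eq_iff transpose_def)
  moreover have "card {t. x (?\<tau> t) = v} = card {t. x t = v}"
    using card_vimage_inj[OF inj_transpose, of "{t. x t = v}" s "succ n s"]
    by (simp add: surj_transpose vimage_def)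
  ultimately show ?thesis by (simp add: ring_eq)
qed

definition support_ok :: "nat \<Rightarrow> state \<Rightarrow> bool" where
  "support_ok n x \<longleftrightarrow> (\<forall>s. x s \<noteq> None \<longrightarrow> site_ok n s)"

lemma support_ok_ring:
  assumes "1 \<le> n" "support_ok n x"
  shows "support_ok n (ring n s x)"
  unfolding support_ok_def
proof (intro allI impI)
  fix t assume t: "ring n s x t \<noteq> None"
  show "site_ok n t"
  proof (cases "class_rank (x s) < class_rank (x (succ n s))")
    case True
    then have "site_ok n s" using assms(2) by (cases "x s") (auto simp: class_rank_def support_ok_def)
    then show ?thesis
      using True t assms site_ok_succ by (auto simp: ring_eq support_ok_def split: if_splits)
  qed (use assms t in \<open>simp add: ring_eq support_ok_def\<close>)
qed

definition columns_ok :: "nat \<Rightarrow> state \<Rightarrow> bool" where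
  "columns_ok n x \<longleftrightarrow> (\<forall>j\<in>{1..n}. x (U j) = None \<or> x (L j) = None)"

lemma Omega_iff:
  "x \<in> Omega n J \<longleftrightarrow> support_ok n x \<and> columns_ok n x \<and> (\<forall>k. card {s. x s = Some k} = mJ n J k)"
  by (simp add: Omega_def support_ok_def columns_ok_def)

lemma columns_ok_swap_column:
  assumes "columns_ok n x"
  shows "columns_ok n (x(U j := x (L j), L j := x (U j)))"
  unfolding columns_ok_def
proof
  fix c assume "c \<in> {1..n}"
  then have "x (U c) = None \<or> x (L c) = None" using assms by (simp add: columns_ok_def)
  then show "(x(U j := x (L j), L j := x (U j))) (U c) = None \<or> (x(U j := x (L j), L j := x (U j))) (L c) = None"
    by (cases "c = j") auto
qed

lemma columns_ok_ring_U1: "columns_ok n x \<Longrightarrow> columns_ok n (ring n (U 1) x)"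
  by (simp add: ring_eq columns_ok_swap_column)

lemma columns_ok_ring_Ln: "columns_ok n x \<Longrightarrow> columns_ok n (ring n (L n) x)"
  using columns_ok_swap_column[of n x n] by (simp add: ring_eq fun_upd_twist)

text \<open>A lone bell inside the lower row may break the column condition; the companion bell in the
  upper row of the same step repairs it.\<close>
lemma columns_ok_sigma_middle:
  assumes "columns_ok n x" "0 < j" "j < n"
  shows "columns_ok n (ring n (U (j + 1)) (ring n (L j) x))"
  unfolding columns_ok_def
proof
  have succs: "succ n (L j) = L (j + 1)" "succ n (U (j + 1)) = U j" using assms(2,3) by simp_all
  fix c assume c: "c \<in> {1..n}"
  show "ring n (U (j + 1)) (ring n (L j) x) (U c) = None \<or> ring n (U (j + 1)) (ring n (L j) x) (L c) = None"
  proof (cases "c = j \<or> c = j + 1")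
    case True
    have "x (U j) = None \<or> x (L j) = None" "x (U (j + 1)) = None \<or> x (L (j + 1)) = None"
      using assms unfolding columns_ok_def by auto
    then show ?thesis using True unfolding ring_def succs Let_def by (auto split: option.splits)
  next
    case False
    then show ?thesis
      using assms c unfolding ring_def succs Let_def columns_ok_def by (auto split: option.splits)
  qed
qed

lemma sigma_in_Omega:
  assumes "1 \<le> n" "j \<le> n" "x \<in> Omega n J"
  shows "sigma n j x \<in> Omega n J"
proof -
  have "support_ok n x" "columns_ok n x" and counts: "\<And>k. card {s. x s = Some k} = mJ n J k"
    using assms(3) by (auto simp: Omega_iff)
  then have "support_ok n (sigma n j x)"
    unfolding sigma_def using assms(1) by (simp add: support_ok_ring)
  moreover have "columns_ok n (sigma n j x)"
  proof -
    consider "j = 0" | "j = n" | "0 < j" "j < n" using assms(2) by linarith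
    then show ?thesis
      using assms(1) by cases (simp_all add: sigma_def \<open>columns_ok n x\<close> columns_ok_ring_U1
          columns_ok_ring_Ln columns_ok_sigma_middle del: One_nat_def)
  qed
  moreover have "card {s. sigma n j x s = Some k} = mJ n J k" for k
    by (simp add: sigma_def card_ring_fibre counts)
  ultimately show ?thesis by (simp add: Omega_iff)
qed

definition classes :: "nat \<Rightarrow> nat set \<Rightarrow> nat set" where
  "classes n J = {c. Some c \<in> typemap n J ` {1..n}}"

lemma finite_classes: "finite (classes n J)"
  unfolding classes_def by (rule finite_vimageI[of _ Some, unfolded vimage_def]) auto

lemma Omega_value_in_classes:
  assumes "x \<in> Omega n J" "x s = Some k"
  shows "k \<in> classes n J"
proof -
  have "finite {s. x s = Some k}"
    using assms(1) by (intro finite_subset[OF _ finite_site_ok]) (auto simp: Omega_iff support_ok_def)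
  then have "0 < card {s. x s = Some k}"
    using assms(2) card_gt_0_iff by blast
  then have "0 < mJ n J k" using assms(1) by (simp add: Omega_iff)
  then show ?thesis by (auto simp: mJ_def classes_def card_gt_0_iff intro: rev_image_eqI)
qed

lemma finite_Omega: "finite (Omega n J)"
proof -
  let ?D = "{s. site_ok n s}" and ?R = "insert None (Some ` classes n J)"
  have "x s \<in> ?R" if "x \<in> Omega n J" for x s
    using that by (cases "x s") (auto intro: Omega_value_in_classes)
  moreover have "x s = None" if "x \<in> Omega n J" "s \<notin> ?D" for x s
    using that by (auto simp: Omega_iff support_ok_def)
  ultimately have "Omega n J \<subseteq> {x. \<forall>s. (s \<in> ?D \<longrightarrow> x s \<in> ?R) \<and> (s \<notin> ?D \<longrightarrow> x s = None)}"
    by blast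
  moreover have "finite {x. \<forall>s. (s \<in> ?D \<longrightarrow> x s \<in> ?R) \<and> (s \<notin> ?D \<longrightarrow> x s = None)}"
    by (intro finite_set_of_finite_funs finite_site_ok) (simp add: finite_classes)
  ultimately show ?thesis by (rule finite_subset)
qed

lemma class_rank_typemap_mono:
  "d1 \<le> d2 \<Longrightarrow> class_rank (typemap n K d1) \<le> class_rank (typemap n K d2)"
  unfolding typemap_def class_rank_def by (auto intro!: card_mono)

text \<open>Original classes identified by \<open>J\<close> stay identified by every \<open>K \<supseteq> J\<close>, because every index
  between them already lies in \<open>J\<close>.\<close>
lemma typemap_eq_superset:
  assumes "1 \<le> d0" "d0 \<le> d" "typemap n J d0 = typemap n J d" "typemap n J d \<noteq> None" "J \<subseteq> K"
  shows "typemap n K d0 = typemap n K d"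
proof -
  have same_count: "{j \<in> {1..<d0}. j \<notin> J} = {j \<in> {1..<d}. j \<notin> J}"
  proof (rule card_subset_eq)
    show "card {j \<in> {1..<d0}. j \<notin> J} = card {j \<in> {1..<d}. j \<notin> J}"
      using assms(3,4) by (auto simp: typemap_def split: if_splits)
  qed (use assms(2) in auto)
  have gap: "j \<in> J" if "d0 \<le> j" "j < d" for j
  proof (rule ccontr)
    assume "j \<notin> J"
    then have "j \<in> {j \<in> {1..<d}. j \<notin> J}" using that assms(1) by simp
    then have "j \<in> {j \<in> {1..<d0}. j \<notin> J}" by (simp only: same_count)
    then show False using that(1) by simp
  qed
  have "{j \<in> {1..<d0}. j \<notin> K} = {j \<in> {1..<d}. j \<notin> K}"
    using gap assms(2,5) by auto (meson not_le subsetD)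
  moreover have "{d0..n} \<subseteq> K \<longleftrightarrow> {d..n} \<subseteq> K"
    using gap assms(2,5) by (auto simp: subset_iff) (meson not_le)
  ultimately show ?thesis unfolding typemap_def by simp
qed

definition relabel :: "nat \<Rightarrow> nat set \<Rightarrow> nat \<Rightarrow> nat option \<Rightarrow> nat option" where
  "relabel n J i v = (case v of None \<Rightarrow> None
     | Some c \<Rightarrow> typemap n (insert i J) (SOME d. d \<in> {1..n} \<and> typemap n J d = Some c))"

lemma relabel_None [simp]: "relabel n J i None = None"
  by (simp add: relabel_def)

lemma phi_eq_comp: "phi n J i x = relabel n J i \<circ> x"
  by (simp add: phi_def relabel_def fun_eq_iff)

lemma typemap_insert_eq_relabel:
  assumes "d \<in> {1..n}"
  shows "typemap n (insert i J) d = relabel n J i (typemap n J d)"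
proof (cases "typemap n J d")
  case None
  then show ?thesis by (auto simp: typemap_def split: if_splits)
next
  case (Some c)
  define d0 where "d0 = (SOME d. d \<in> {1..n} \<and> typemap n J d = Some c)"
  have "\<exists>d'. d' \<in> {1..n} \<and> typemap n J d' = Some c" using assms Some by blast
  then have d0: "d0 \<in> {1..n} \<and> typemap n J d0 = Some c" unfolding d0_def by (rule someI_ex)
  have "typemap n (insert i J) d0 = typemap n (insert i J) d"
  proof (cases "d0 \<le> d")
    case True
    then show ?thesis using typemap_eq_superset[of d0 d n J "insert i J", OF _ _ _ _ subset_insertI] d0 Some by simp
  next
    case False
    then show ?thesis using typemap_eq_superset[of d d0 n J "insert i J", OF _ _ _ _ subset_insertI] d0 Some assms by simp
  qed
  then show ?thesis by (simp add: relabel_def Some d0_def)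
qed

lemma class_rank_relabel_mono:
  assumes "a \<in> insert None (Some ` classes n J)" "b \<in> insert None (Some ` classes n J)"
    and "class_rank a \<le> class_rank b"
  shows "class_rank (relabel n J i a) \<le> class_rank (relabel n J i b)"
proof (cases "a = b \<or> b = None")
  case False
  then obtain p q where pq: "a = Some p" "b = Some q" "p < q"
    using assms(3) by (cases a; cases b) (auto simp: class_rank_def)
  then obtain da db where d: "da \<in> {1..n}" "db \<in> {1..n}" "typemap n J da = a" "typemap n J db = b"
    using assms(1,2) by (auto simp: classes_def)
  have "da \<le> db"
  proof (rule ccontr)
    assume "\<not> da \<le> db"
    then have "class_rank b \<le> class_rank a"
      using class_rank_typemap_mono[of db da n J] d by simp
    then show False using pq by (simp add: class_rank_def)
  qed
  then show ?thesis
    using class_rank_typemap_mono[of da db n "insert i J"] d by (simp add: typemap_insert_eq_relabel)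
qed (auto simp: relabel_def class_rank_def)

lemma sigma_phi:
  assumes "x \<in> Omega n J"
  shows "sigma n j (phi n J i x) = phi n J i (sigma n j x)"
proof -
  have "range x \<subseteq> insert None (Some ` classes n J)"
    using Omega_value_in_classes[OF assms] by (auto intro: option.exhaust_sel)
  then show ?thesis
    unfolding phi_eq_comp by (rule sigma_comp_mono) (rule class_rank_relabel_mono)
qed

lemma card_relabel_fibre:
  assumes x: "x \<in> Omega n J"
  shows "card {s. relabel n J i (x s) = Some k} = mJ n (insert i J) k"
proof -
  define C where "C = {c \<in> classes n J. relabel n J i (Some c) = Some k}"
  have "finite C" unfolding C_def using finite_classes by simp
  have "finite {s. x s = Some c}" for c
    using x by (intro finite_subset[OF _ finite_site_ok]) (auto simp: Omega_iff support_ok_def)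
  have "{s. relabel n J i (x s) = Some k} = (\<Union>c\<in>C. {s. x s = Some c})"
    using Omega_value_in_classes[OF x] by (auto simp: C_def relabel_def split: option.splits)
  also have "card \<dots> = (\<Sum>c\<in>C. card {s. x s = Some c})"
    using \<open>finite C\<close> \<open>\<And>c. finite {s. x s = Some c}\<close> by (intro card_UN_disjoint) auto
  also have "\<dots> = (\<Sum>c\<in>C. mJ n J c)" using x by (simp add: Omega_iff)
  also have "\<dots> = card (\<Union>c\<in>C. {d \<in> {1..n}. typemap n J d = Some c})"
    unfolding mJ_def using \<open>finite C\<close> by (intro card_UN_disjoint[symmetric]) auto
  also have "(\<Union>c\<in>C. {d \<in> {1..n}. typemap n J d = Some c}) = {d \<in> {1..n}. typemap n (insert i J) d = Some k}"
  proof (intro set_eqI)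
    fix d
    show "d \<in> (\<Union>c\<in>C. {d \<in> {1..n}. typemap n J d = Some c}) \<longleftrightarrow> d \<in> {d \<in> {1..n}. typemap n (insert i J) d = Some k}"
    proof (cases "d \<in> {1..n}")
      case True
      then show ?thesis
        by (cases "typemap n J d")
          (auto simp: C_def classes_def typemap_insert_eq_relabel[OF True] intro: rev_image_eqI)
    qed auto
  qed
  finally show ?thesis unfolding mJ_def .
qed

lemma phi_in_Omega:
  assumes "x \<in> Omega n J"
  shows "phi n J i x \<in> Omega n (insert i J)"
proof -
  have "support_ok n x" "columns_ok n x" using assms by (simp_all add: Omega_iff)
  then have "support_ok n (phi n J i x)" "columns_ok n (phi n J i x)"
    unfolding support_ok_def columns_ok_def phi_eq_comp by (metis comp_apply relabel_None)+
  then show ?thesis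
    using card_relabel_fibre[OF assms] by (simp add: Omega_iff phi_eq_comp)
qed

lemma sum_rate_eq:
  assumes "finite A"
  shows "(\<Sum>y\<in>A. rate n x y) = (\<Sum>j\<in>{0..n}. if sigma n j x \<in> A then wt n j else 0)"
  unfolding rate_def by (subst sum.swap) (simp add: sum.delta'[OF assms])

text \<open>Since \<open>rate n x x\<close> records the weight of the bells that leave \<open>x\<close> fixed, the total rate out
  of every state is the same constant \<open>\<Sum>j. wt n j\<close>.\<close>
lemma gen_Omega_eq:
  assumes "1 \<le> n" "x \<in> Omega n K"
  shows "gen n (Omega n K) x y = rate n x y - (if x = y then (\<Sum>j\<in>{0..n}. wt n j) else 0)"
proof (cases "x = y")
  case True
  have "(\<Sum>z\<in>Omega n K. rate n x z) = (\<Sum>j\<in>{0..n}. wt n j)"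
    using sigma_in_Omega[OF assms(1) _ assms(2)] by (simp add: sum_rate_eq finite_Omega)
  moreover have "(\<Sum>z\<in>Omega n K. rate n x z) = rate n x x + (\<Sum>z\<in>Omega n K - {x}. rate n x z)"
    using finite_Omega assms(2) by (rule sum.remove)
  ultimately show ?thesis using True by (simp add: gen_def)
qed (simp add: gen_def)

lemma lumpable_phi:
  assumes "1 \<le> n"
  shows "lumpable (Omega n J) (gen n (Omega n J)) (phi n J i) (gen n (Omega n (insert i J)))"
  unfolding lumpable_def
proof (intro ballI allI)
  fix x y' assume x: "x \<in> Omega n J"
  let ?F = "{y \<in> Omega n J. phi n J i y = y'}" and ?W = "\<Sum>j\<in>{0..n}. wt n j"
  have "finite ?F" using finite_Omega by simp
  have "(\<Sum>y\<in>?F. gen n (Omega n J) x y) = (\<Sum>y\<in>?F. rate n x y) - (\<Sum>y\<in>?F. if x = y then ?W else 0)"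
    by (simp add: gen_Omega_eq[OF assms x] sum_subtractf)
  also have "(\<Sum>y\<in>?F. if x = y then ?W else 0) = (if phi n J i x = y' then ?W else 0)"
    using x \<open>finite ?F\<close> by (simp add: sum.delta)
  also have "(\<Sum>y\<in>?F. rate n x y) = (\<Sum>j\<in>{0..n}. if sigma n j (phi n J i x) = y' then wt n j else 0)"
    using \<open>finite ?F\<close> sigma_in_Omega[OF assms _ x] by (simp add: sum_rate_eq sigma_phi[OF x])
  also have "\<dots> - (if phi n J i x = y' then ?W else 0) = gen n (Omega n (insert i J)) (phi n J i x) y'"
    by (simp add: gen_Omega_eq[OF assms phi_in_Omega[OF x]] rate_def)
  finally show "(\<Sum>y\<in>?F. gen n (Omega n J) x y) = gen n (Omega n (insert i J)) (phi n J i x) y'" .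
qed

theorem proposition1:
  fixes n i :: nat and J :: "nat set" and M :: "'w measure" and X :: "real \<Rightarrow> 'w \<Rightarrow> state"
  assumes "n \<ge> 2" and "J \<subseteq> {1..n}" and "i \<in> {1..n} - J"
    and "prob_space M"
    and "is_ctmc M (Omega n J) (gen n (Omega n J)) X"
  shows "is_ctmc M (Omega n (insert i J)) (gen n (Omega n (insert i J)))
           (\<lambda>t \<omega>. phi n J i (X t \<omega>))"
proof (rule is_ctmc_lumpable[where X = X and f = "phi n J i"])
  show "finite_measure M" using \<open>prob_space M\<close> by (rule prob_space.finite_measure)
  show "phi n J i ` Omega n J \<subseteq> Omega n (insert i J)" using phi_in_Omega by blast
  show "lumpable (Omega n J) (gen n (Omega n J)) (phi n J i) (gen n (Omega n (insert i J)))"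
    using \<open>n \<ge> 2\<close> by (intro lumpable_phi) simp
qed (simp_all add: assms(5) finite_Omega)

end
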